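(* For $x,\theta>0$ let $d_{\rm IS}(x,\theta)=\frac{x}{\theta}-\log\frac{x}{\theta}-1$ be the Itakura–Saito distance. Let $g:[0,\infty)\to[0,\infty)$ be measurable such that $0<C:=\int_0^\infty \frac{1}{x}g(d_{\rm IS}(x,\theta))\,dx<\infty$ (this quantity does not depend on $\theta$), and consider the IS distribution $$p(x\mid\theta)=\frac{1}{C}\,\frac{1}{x}\,g\big(d_{\rm IS}(x,\theta)\big),\qquad x>0,\ \theta>0.$$ Let $f:[0,\infty)\to\mathbb{R}$ be differentiable. If $$\int_0^\infty g(t)\,|f'(t)|\,dt<\infty,$$ then for every $\theta>0$ $$\int_0^\infty p(x\mid\theta)\, f'\big(d_{\rm IS}(x,\theta)\big)\,(x-\theta)\,dx=0,$$ i.e. the estimating equation holds without any bias-correction term.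
   Context: The parameter is estimated by minimizing $\int p(x)\,f(d_{\rm IS}(x,\theta))\,dx$; since $d_{\rm IS}$ is the Bregman divergence generated by $\phi(x)=-\log x$, the stationarity condition is the displayed estimating equation, and "unbiased" means it is satisfied at the true parameter $\theta$ of the model. *)

theory Defs
  imports "HOL-Analysis.Analysis"
begin

definition d_IS :: "real \<Rightarrow> real \<Rightarrow> real" where
  "d_IS x \<theta> = x / \<theta> - ln (x / \<theta>) - 1"

definition IS_norm :: "(real \<Rightarrow> real) \<Rightarrow> real \<Rightarrow> ennreal" where
  "IS_norm g \<theta> = (\<integral>\<^sup>+ x\<in>{0<..}. ennreal ((1 / x) * g (d_IS x \<theta>)) \<partial>lborel)"

definition IS_density :: "(real \<Rightarrow> real) \<Rightarrow> real \<Rightarrow> real \<Rightarrow> real" where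
  "IS_density g \<theta> x = (1 / enn2real (IS_norm g \<theta>)) * (1 / x) * g (d_IS x \<theta>)"

end

theory Submission
  imports Defs
begin

(*
  Substituting t = d_IS(x, theta) separately on the two branches (theta, oo) and (0, theta),
  on each of which x |-> d_IS(x, theta) is a bijection onto (0, oo) with derivative
  1/theta - 1/x, turns the integrand p(x) f'(d_IS) (x - theta) = (theta/C) (1/theta - 1/x) g f'(d_IS)
  into +(theta/C) g(t) f'(t) dt on the upper branch and -(theta/C) g(t) f'(t) dt on the lower
  one. Both branch integrals equal (theta/C) int_0^oo g f', which is finite by hypothesis,
  so they cancel; the value of C plays no role.
*)

lemma borel_measurable_derivative_Ioi:
  fixes f f' :: "real \<Rightarrow> real"
  assumes deriv: "\<And>x. x > a \<Longrightarrow> (f has_real_derivative f' x) (at x)"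
  shows "set_borel_measurable borel {a<..} f'"
  unfolding set_borel_measurable_def
proof (rule borel_measurable_LIMSEQ_real)
  let ?q = "\<lambda>n x. indicator {a<..} x *\<^sub>R ((f (x + inverse (Suc n)) - f x) / inverse (Suc n))"
  have cont: "continuous_on {a<..} f"
    by (rule continuous_at_imp_continuous_on) (auto intro: DERIV_isCont deriv)
  show "?q n \<in> borel_measurable borel" for n
  proof (rule borel_measurable_continuous_on_indicator)
    have "(\<lambda>x. x + inverse (real (Suc n))) ` {a<..} \<subseteq> {a<..}"
    proof (rule image_subsetI)
      fix x :: real
      assume "x \<in> {a<..}"
      moreover have "0 < inverse (real (Suc n))"
        by simp
      ultimately show "x + inverse (real (Suc n)) \<in> {a<..}"
        by (simp only: greaterThan_iff)
    qed
    then have "continuous_on {a<..} (\<lambda>x. f (x + inverse (Suc n)))"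
      by (intro continuous_on_compose2[OF cont] continuous_intros)
    with cont show "continuous_on {a<..} (\<lambda>x. (f (x + inverse (Suc n)) - f x) / inverse (Suc n))"
      by (auto intro!: continuous_intros)
  qed auto
  show "(\<lambda>n. ?q n x) \<longlonglongrightarrow> indicator {a<..} x *\<^sub>R f' x" for x
  proof (cases "x > a")
    case True
    have "((\<lambda>h. (f (x + h) - f x) / h) \<longlongrightarrow> f' x) (at 0)"
      using deriv[OF True] by (simp add: DERIV_def)
    moreover have "filterlim (\<lambda>n. inverse (real (Suc n))) (at 0) sequentially"
      by (rule filterlim_atI[OF LIMSEQ_inverse_real_of_nat]) auto
    ultimately have "(\<lambda>n. (f (x + inverse (Suc n)) - f x) / inverse (Suc n)) \<longlonglongrightarrow> f' x"
      by (rule filterlim_compose)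
    then show ?thesis
      using True by simp
  qed simp
qed

lemma inj_on_if_deriv_nonzero:
  fixes f :: "real \<Rightarrow> real"
  assumes "is_interval S"
    and deriv: "\<And>x. x \<in> S \<Longrightarrow> (f has_real_derivative f' x) (at x)"
    and nonzero: "\<And>x. x \<in> S \<Longrightarrow> f' x \<noteq> 0"
  shows "inj_on f S"
proof -
  have neq: "f a \<noteq> f b" if "a \<in> S" "b \<in> S" "a < b" for a b
  proof
    assume "f a = f b"
    have ab: "{a..b} \<subseteq> S"
      using \<open>is_interval S\<close> that by (meson atLeastAtMost_iff is_interval_1 subsetI)
    then have "continuous_on {a..b} f"
      by (intro continuous_at_imp_continuous_on) (auto intro: DERIV_isCont deriv)
    moreover have "f differentiable (at x)" if "a < x" "x < b" for x
      using ab that deriv real_differentiable_def by (meson atLeastAtMost_iff less_imp_le subsetD)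
    ultimately obtain z where z: "a < z" "z < b" "(f has_real_derivative 0) (at z)"
      using Rolle[OF \<open>a < b\<close> \<open>f a = f b\<close>] by blast
    then have "z \<in> S"
      using ab by auto
    then have "f' z = 0"
      using DERIV_unique[OF deriv z(3)] by blast
    with \<open>z \<in> S\<close> show False
      using nonzero by blast
  qed
  show ?thesis
  proof (rule inj_onI)
    fix a b
    assume "a \<in> S" "b \<in> S" "f a = f b"
    then show "a = b"
      using neq[of a b] neq[of b a] by (cases a b rule: linorder_cases) auto
  qed
qed

lemma set_integrable_lborel_iff_absolutely_integrable:
  fixes f :: "'a::euclidean_space \<Rightarrow> real"
  assumes "set_borel_measurable borel S f"
  shows "set_integrable lborel S f \<longleftrightarrow> f absolutely_integrable_on S"
  using assms integrable_completion[of "\<lambda>x. indicator S x *\<^sub>R f x" lborel]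
  by (simp add: set_integrable_def set_borel_measurable_def)

lemma set_integral_eq_0_if_branches_cancel:
  fixes T A :: "'a::euclidean_space \<Rightarrow> real"
  assumes split: "\<And>x. indicator S x * T x = c * (indicator S1 x - indicator S2 x) * A x"
    and A_meas: "A \<in> borel_measurable borel"
    and S12: "S1 \<in> sets borel" "S2 \<in> sets borel"
    and A1: "A absolutely_integrable_on S1" and A2: "A absolutely_integrable_on S2"
    and same: "integral S1 A = integral S2 A"
  shows "set_integrable lborel S T \<and> (LINT x:S|lborel. T x) = 0"
proof -
  have eq: "(\<lambda>x. indicator S x *\<^sub>R T x)
      = (\<lambda>x. c * (indicator S1 x *\<^sub>R A x) - c * (indicator S2 x *\<^sub>R A x))"
    using split by (simp add: fun_eq_iff algebra_simps)
  have "set_borel_measurable borel S1 A" "set_borel_measurable borel S2 A"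
    using S12 A_meas by (simp_all add: set_borel_measurable_def)
  then have i1: "set_integrable lborel S1 A" and i2: "set_integrable lborel S2 A"
    using A1 A2 set_integrable_lborel_iff_absolutely_integrable by blast+
  then have "set_integrable lborel S T"
    unfolding set_integrable_def eq by simp
  moreover have "(LINT x:S|lborel. T x) = c * (LINT x:S1|lborel. A x) - c * (LINT x:S2|lborel. A x)"
    using i1 i2 unfolding set_lebesgue_integral_def eq set_integrable_def by simp
  moreover have "\<dots> = 0"
    using same by (simp add: set_borel_integral_eq_integral(2)[OF i1] set_borel_integral_eq_integral(2)[OF i2])
  ultimately show ?thesis
    by simp
qed

(* f' is unconstrained on the negative reals, hence the restriction to (0, oo). *)
lemma restricted_weight_times_derivative_integrable:
  fixes g f f' :: "real \<Rightarrow> real"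
  assumes g_meas: "set_borel_measurable borel {0..} g"
    and g_nonneg: "\<And>t. t \<ge> 0 \<Longrightarrow> g t \<ge> 0"
    and f_deriv: "\<And>t. t \<ge> 0 \<Longrightarrow> (f has_real_derivative f' t) (at t within {0..})"
    and finite: "(\<integral>\<^sup>+ t\<in>{0..}. ennreal (g t * \<bar>f' t\<bar>) \<partial>lborel) < \<infinity>"
  defines "H \<equiv> \<lambda>t. indicator {0<..} t * (g t * f' t)"
  shows "H \<in> borel_measurable borel" "H absolutely_integrable_on {0<..}"
proof -
  have "(f has_real_derivative f' t) (at t)" if "t > 0" for t
  proof -
    have "(f has_real_derivative f' t) (at t within {0<..})"
      using f_deriv[OF less_imp_le[OF that]] by (rule has_field_derivative_subset) auto
    then show ?thesis
      using that at_within_open[of t "{0<..}"] by simp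
  qed
  then have "set_borel_measurable borel {0<..} f'"
    by (rule borel_measurable_derivative_Ioi)
  moreover have "H = (\<lambda>t. (indicator {0..} t * g t) * (indicator {0<..} t * f' t))"
    by (auto simp: H_def fun_eq_iff split: split_indicator)
  ultimately show H_meas: "H \<in> borel_measurable borel"
    using g_meas by (simp add: set_borel_measurable_def)
  have "(\<integral>\<^sup>+ t. ennreal (norm (H t)) \<partial>lborel) \<le> (\<integral>\<^sup>+ t\<in>{0..}. ennreal (g t * \<bar>f' t\<bar>) \<partial>lborel)"
    using g_nonneg by (intro nn_integral_mono) (auto simp: H_def abs_mult split: split_indicator)
  then have "integrable lborel H"
    using H_meas finite by (intro integrableI_bounded) auto
  moreover have H_restr: "(\<lambda>t. indicator {0<..} t *\<^sub>R H t) = H"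
    by (auto simp: H_def fun_eq_iff split: split_indicator)
  ultimately show "H absolutely_integrable_on {0<..}"
    using set_integrable_lborel_iff_absolutely_integrable[of "{0<..}" H] H_meas
    unfolding set_borel_measurable_def set_integrable_def H_restr by blast
qed

lemma d_IS_has_real_derivative:
  assumes "x > 0" "\<theta> > 0"
  shows "((\<lambda>x. d_IS x \<theta>) has_real_derivative 1/\<theta> - 1/x) (at x)"
  unfolding d_IS_def using assms
  by (auto intro!: derivative_eq_intros simp: field_simps)

lemma continuous_on_d_IS:
  assumes "S \<subseteq> {0<..}" "\<theta> > 0"
  shows "continuous_on S (\<lambda>x. d_IS x \<theta>)"
  unfolding d_IS_def using assms by (auto intro!: continuous_intros)

lemma d_IS_self: "\<theta> \<noteq> 0 \<Longrightarrow> d_IS \<theta> \<theta> = 0"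
  by (simp add: d_IS_def)

lemma d_IS_pos:
  assumes "x > 0" "\<theta> > 0" "x \<noteq> \<theta>"
  shows "d_IS x \<theta> > 0"
proof -
  have "x / \<theta> \<noteq> 1"
    using assms by simp
  then have "ln (x / \<theta>) \<noteq> x / \<theta> - 1"
    using ln_eq_minus_one[of "x / \<theta>"] assms by auto
  moreover have "ln (x / \<theta>) \<le> x / \<theta> - 1"
    using assms by (intro ln_le_minus_one) simp
  ultimately show ?thesis
    by (simp add: d_IS_def)
qed

lemma d_IS_image_above:
  assumes "\<theta> > 0"
  shows "(\<lambda>x. d_IS x \<theta>) ` {\<theta><..} = {0<..}"
proof
  show "(\<lambda>x. d_IS x \<theta>) ` {\<theta><..} \<subseteq> {0<..}"
    using assms d_IS_pos by auto
  show "{0<..} \<subseteq> (\<lambda>x. d_IS x \<theta>) ` {\<theta><..}"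
  proof
    fix t :: real
    assume "t \<in> {0<..}"
    then have t: "t > 0" by simp
    define b where "b = \<theta> * exp (t + 1)"
    have "2 * (1 + t) \<le> exp 1 * exp t"
      using exp_ge_add_one_self[of 1] exp_ge_add_one_self[of t] t
      by (intro mult_mono) auto
    then have "2 * (1 + t) \<le> exp (t + 1)"
      by (simp add: exp_add mult.commute)
    then have "t \<le> d_IS b \<theta>"
      using assms by (simp add: d_IS_def b_def)
    moreover have "\<theta> \<le> b"
      using assms t by (simp add: b_def)
    moreover have "continuous_on {\<theta>..b} (\<lambda>x. d_IS x \<theta>)"
      using assms by (intro continuous_on_d_IS) auto
    ultimately obtain x where x: "\<theta> \<le> x" "x \<le> b" "d_IS x \<theta> = t"
      using IVT'[of "\<lambda>x. d_IS x \<theta>" \<theta> t b] assms t by (auto simp: d_IS_self)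
    moreover have "x \<noteq> \<theta>"
      using x t assms by (auto simp: d_IS_self)
    ultimately have "x \<in> {\<theta><..}"
      by simp
    from this x(3)[symmetric] show "t \<in> (\<lambda>x. d_IS x \<theta>) ` {\<theta><..}"
      by (rule rev_image_eqI)
  qed
qed

lemma d_IS_image_below:
  assumes "\<theta> > 0"
  shows "(\<lambda>x. d_IS x \<theta>) ` {0<..<\<theta>} = {0<..}"
proof
  show "(\<lambda>x. d_IS x \<theta>) ` {0<..<\<theta>} \<subseteq> {0<..}"
    using assms d_IS_pos by auto
  show "{0<..} \<subseteq> (\<lambda>x. d_IS x \<theta>) ` {0<..<\<theta>}"
  proof
    fix t :: real
    assume "t \<in> {0<..}"
    then have t: "t > 0" by simp
    define a where "a = \<theta> * exp (- (t + 1))"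
    have "0 < a" "a < \<theta>"
      using assms t by (simp_all add: a_def)
    moreover have "t \<le> d_IS a \<theta>"
      using assms by (simp add: d_IS_def a_def)
    moreover have "continuous_on {a..\<theta>} (\<lambda>x. d_IS x \<theta>)"
      using \<open>0 < a\<close> assms by (intro continuous_on_d_IS) auto
    ultimately obtain x where x: "a \<le> x" "x \<le> \<theta>" "d_IS x \<theta> = t"
      using IVT2'[of "\<lambda>x. d_IS x \<theta>" \<theta> t a] assms t by (auto simp: d_IS_self)
    moreover have "x \<noteq> \<theta>"
      using x t assms by (auto simp: d_IS_self)
    ultimately have "x \<in> {0<..<\<theta>}"
      using \<open>0 < a\<close> by simp
    from this x(3)[symmetric] show "t \<in> (\<lambda>x. d_IS x \<theta>) ` {0<..<\<theta>}"
      by (rule rev_image_eqI)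
  qed
qed

lemma d_IS_change_of_variables:
  assumes "\<theta> > 0" "S \<in> sets lebesgue" "is_interval S" "S \<subseteq> {0<..} - {\<theta>}"
    and image: "(\<lambda>x. d_IS x \<theta>) ` S = {0<..}"
    and h: "h absolutely_integrable_on {0<..}"
  shows "(\<lambda>x. \<bar>1/\<theta> - 1/x\<bar> * h (d_IS x \<theta>)) absolutely_integrable_on S
    \<and> integral S (\<lambda>x. \<bar>1/\<theta> - 1/x\<bar> * h (d_IS x \<theta>)) = integral {0<..} h"
proof -
  have deriv: "((\<lambda>x. d_IS x \<theta>) has_real_derivative 1/\<theta> - 1/x) (at x)" if "x \<in> S" for x
    using d_IS_has_real_derivative assms(1,4) that by auto
  have "1/\<theta> - 1/x \<noteq> 0" if "x \<in> S" for x
    using assms(4) that by auto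
  then have inj: "inj_on (\<lambda>x. d_IS x \<theta>) S"
    using inj_on_if_deriv_nonzero[OF \<open>is_interval S\<close> deriv] by blast
  have "((\<lambda>x. d_IS x \<theta>) has_real_derivative 1/\<theta> - 1/x) (at x within S)" if "x \<in> S" for x
    using deriv[OF that] by (rule has_field_derivative_at_within)
  then have "(\<lambda>x. \<bar>1/\<theta> - 1/x\<bar> * h (d_IS x \<theta>)) absolutely_integrable_on S
      \<and> integral S (\<lambda>x. \<bar>1/\<theta> - 1/x\<bar> * h (d_IS x \<theta>)) = integral {0<..} h
    \<longleftrightarrow> h absolutely_integrable_on (\<lambda>x. d_IS x \<theta>) ` S
      \<and> integral ((\<lambda>x. d_IS x \<theta>) ` S) h = integral {0<..} h"
    using \<open>S \<in> sets lebesgue\<close> inj by (intro has_absolute_integral_change_of_variables_1')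
  then show ?thesis
    using h by (simp only: image simp_thms)
qed

lemma IS_density_times_deviation:
  assumes "x > 0" "\<theta> > 0"
  shows "IS_density g \<theta> x * (x - \<theta>) = \<theta> / enn2real (IS_norm g \<theta>) * (1/\<theta> - 1/x) * g (d_IS x \<theta>)"
  using assms by (cases "enn2real (IS_norm g \<theta>) = 0") (simp_all add: IS_density_def field_simps)

lemma IS_integrand_eq:
  assumes "\<theta> > 0"
  shows "indicator {0<..} x * (IS_density g \<theta> x * f' (d_IS x \<theta>) * (x - \<theta>))
    = \<theta> / enn2real (IS_norm g \<theta>) * (indicator {\<theta><..} x - indicator {0<..<\<theta>} x)
      * (\<bar>1/\<theta> - 1/x\<bar> * (indicator {0<..} (d_IS x \<theta>) * (g (d_IS x \<theta>) * f' (d_IS x \<theta>))))"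
proof (cases "x > 0 \<and> x \<noteq> \<theta>")
  case True
  then have x: "x > 0" "x \<noteq> \<theta>"
    by auto
  have "IS_density g \<theta> x * f' (d_IS x \<theta>) * (x - \<theta>)
      = (IS_density g \<theta> x * (x - \<theta>)) * f' (d_IS x \<theta>)"
    by (simp only: mult_ac)
  also have "\<dots> = \<theta> / enn2real (IS_norm g \<theta>) * (1/\<theta> - 1/x) * (g (d_IS x \<theta>) * f' (d_IS x \<theta>))"
    unfolding IS_density_times_deviation[OF x(1) assms] by (simp only: mult_ac)
  also have "1/\<theta> - 1/x = (indicator {\<theta><..} x - indicator {0<..<\<theta>} x) * \<bar>1/\<theta> - 1/x\<bar>"
    using x assms by (cases "x < \<theta>") (auto simp: field_simps)
  finally show ?thesis
    using x d_IS_pos[OF x(1) assms x(2)] by (simp add: mult_ac)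
qed (use assms in auto)

theorem mainTheorem2:
  fixes g f f' :: "real \<Rightarrow> real" and \<theta> :: real
  assumes g_meas: "set_borel_measurable borel {0..} g"
    and g_nonneg: "\<And>t. t \<ge> 0 \<Longrightarrow> g t \<ge> 0"
    and C_pos: "0 < IS_norm g \<theta>"
    and C_fin: "IS_norm g \<theta> < \<infinity>"
    and f_deriv: "\<And>t. t \<ge> 0 \<Longrightarrow> (f has_real_derivative f' t) (at t within {0..})"
    and gf_int: "(\<integral>\<^sup>+ t\<in>{0..}. ennreal (g t * \<bar>f' t\<bar>) \<partial>lborel) < \<infinity>"
    and \<theta>_pos: "\<theta> > 0"
  shows "set_integrable lborel {0<..}
           (\<lambda>x. IS_density g \<theta> x * f' (d_IS x \<theta>) * (x - \<theta>))
       \<and> (LINT x:{0<..}|lborel. IS_density g \<theta> x * f' (d_IS x \<theta>) * (x - \<theta>)) = 0"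
proof -
  define H where "H t = indicator {0<..} t * (g t * f' t)" for t :: real
  define A where "A x = \<bar>1/\<theta> - 1/x\<bar> * H (d_IS x \<theta>)" for x
  have H_meas [measurable]: "H \<in> borel_measurable borel"
    and H_abs: "H absolutely_integrable_on {0<..}"
    using restricted_weight_times_derivative_integrable[OF g_meas g_nonneg f_deriv gf_int]
    unfolding H_def by blast+
  have above: "A absolutely_integrable_on {\<theta><..} \<and> integral {\<theta><..} A = integral {0<..} H"
    unfolding A_def using d_IS_image_above[OF \<theta>_pos] H_abs
    by (intro d_IS_change_of_variables[OF \<theta>_pos]) (use \<theta>_pos in \<open>auto simp: is_interval_convex_1\<close>)
  have below: "A absolutely_integrable_on {0<..<\<theta>} \<and> integral {0<..<\<theta>} A = integral {0<..} H"
    unfolding A_def using d_IS_image_below[OF \<theta>_pos] H_abs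
    by (intro d_IS_change_of_variables[OF \<theta>_pos]) (use \<theta>_pos in \<open>auto simp: is_interval_convex_1\<close>)
  have "A \<in> borel_measurable borel"
    unfolding A_def d_IS_def by measurable
  show ?thesis
  proof (rule set_integral_eq_0_if_branches_cancel)
    show "indicator {0<..} x * (IS_density g \<theta> x * f' (d_IS x \<theta>) * (x - \<theta>))
      = \<theta> / enn2real (IS_norm g \<theta>) * (indicator {\<theta><..} x - indicator {0<..<\<theta>} x) * A x" for x
      unfolding A_def H_def by (rule IS_integrand_eq[OF \<theta>_pos])
  qed (use above below \<open>A \<in> borel_measurable borel\<close> in simp_all)
qed

end
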